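(* Let $G=(V,E)$ be a network, $s,t\in V$, and $B$ any bound. Let $L^{(s,t)}$ be the set of weight-shortest paths from $s$ to $t$, and let $\mathbb{L}=\bigcap_{\pi\in L^{(s,t)}}\pi$ be the set of in-all-weight-shortest-paths links. Then every survivable connection $(\pi_1,\pi_2)$ that is an optimal solution of the CT-Constrained QoS Max-Survivability problem with bound $B$ satisfies $\mathbb{C}(\pi_1,\pi_2)\subseteq\mathbb{L}$.
   Context: A network is a directed graph $G=(V,E)$, $N=|V|$, $M=|E|$. Each link $e$ has a failure probability $p_e\in(0,p_{max}]$ with $p_{max}<1$, and a positive weight $w_e$. Paths are identified with their sets of links. $P^{(s,t)}$ is the set of simple paths from $s$ to $t$. A survivable connection from $s$ to $t$ is a pair $(\pi_1,\pi_2)\in P^{(s,t)}\times P^{(s,t)}$; the two paths may coincide. Its critical links are $\mathbb{C}(\pi_1,\pi_2)=\pi_1\cap\pi_2$. Its survivability level is $\prod_{e\in\pi_1\cap\pi_2}(1-p_e)$, which equals $1$ if there are no critical links. The weight of a path is $W(\pi)=\sum_{e\in\pi}w_e$. A weight-shortest path from $u$ to $v$ is a path from $u$ to $v$ of minimum weight. The CT-weight of a connection is $W_{CT}(\pi_1,\pi_2)=W(\pi_1)+W(\pi_2)$. CT-Constrained QoS Max-Survivability (CT-CQMS) problem: given $G$, $s$, $t$ and a bound $B$, find a survivable connection $(\pi_1,\pi_2)$ from $s$ to $t$ maximizing $\prod_{e\in\pi_1\cap\pi_2}(1-p_e)$ subject to $W_{CT}(\pi_1,\pi_2)\le B$. 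*)

theory Defs
  imports Complex_Main
begin

definition network ::
  "'v set \<Rightarrow> ('v \<times> 'v) set \<Rightarrow> ('v \<times> 'v \<Rightarrow> real) \<Rightarrow> real \<Rightarrow> ('v \<times> 'v \<Rightarrow> real) \<Rightarrow> bool" where
  "network V E p pmax w \<longleftrightarrow> finite V \<and> E \<subseteq> V \<times> V \<and> pmax < 1 \<and>
     (\<forall>e\<in>E. 0 < p e \<and> p e \<le> pmax \<and> 0 < w e)"

definition links_of :: "'v list \<Rightarrow> ('v \<times> 'v) set" where
  "links_of xs = set (zip xs (tl xs))"

definition simple_paths ::
  "'v set \<Rightarrow> ('v \<times> 'v) set \<Rightarrow> 'v \<Rightarrow> 'v \<Rightarrow> ('v \<times> 'v) set set" where
  "simple_paths V E s t = {links_of xs | xs. xs \<noteq> [] \<and> hd xs = s \<and> last xs = t \<and>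
      distinct xs \<and> set xs \<subseteq> V \<and> links_of xs \<subseteq> E}"

definition path_weight :: "('v \<times> 'v \<Rightarrow> real) \<Rightarrow> ('v \<times> 'v) set \<Rightarrow> real" where
  "path_weight w \<pi> = (\<Sum>e\<in>\<pi>. w e)"

definition shortest_paths ::
  "'v set \<Rightarrow> ('v \<times> 'v) set \<Rightarrow> ('v \<times> 'v \<Rightarrow> real) \<Rightarrow> 'v \<Rightarrow> 'v \<Rightarrow> ('v \<times> 'v) set set" where
  "shortest_paths V E w s t = {\<pi> \<in> simple_paths V E s t.
      \<forall>\<pi>'\<in>simple_paths V E s t. path_weight w \<pi> \<le> path_weight w \<pi>'}"

definition in_all_sp_links ::
  "'v set \<Rightarrow> ('v \<times> 'v) set \<Rightarrow> ('v \<times> 'v \<Rightarrow> real) \<Rightarrow> 'v \<Rightarrow> 'v \<Rightarrow> ('v \<times> 'v) set" where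
  "in_all_sp_links V E w s t = \<Inter> (shortest_paths V E w s t)"

definition critical_links :: "('v \<times> 'v) set \<Rightarrow> ('v \<times> 'v) set \<Rightarrow> ('v \<times> 'v) set" where
  "critical_links \<pi>1 \<pi>2 = \<pi>1 \<inter> \<pi>2"

definition survivability ::
  "('v \<times> 'v \<Rightarrow> real) \<Rightarrow> ('v \<times> 'v) set \<Rightarrow> ('v \<times> 'v) set \<Rightarrow> real" where
  "survivability p \<pi>1 \<pi>2 = (\<Prod>e\<in>critical_links \<pi>1 \<pi>2. 1 - p e)"

definition CT_weight ::
  "('v \<times> 'v \<Rightarrow> real) \<Rightarrow> ('v \<times> 'v) set \<Rightarrow> ('v \<times> 'v) set \<Rightarrow> real" where
  "CT_weight w \<pi>1 \<pi>2 = path_weight w \<pi>1 + path_weight w \<pi>2"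

definition CT_feasible ::
  "'v set \<Rightarrow> ('v \<times> 'v) set \<Rightarrow> ('v \<times> 'v \<Rightarrow> real) \<Rightarrow> 'v \<Rightarrow> 'v \<Rightarrow> real
   \<Rightarrow> ('v \<times> 'v) set \<Rightarrow> ('v \<times> 'v) set \<Rightarrow> bool" where
  "CT_feasible V E w s t B \<pi>1 \<pi>2 \<longleftrightarrow>
     \<pi>1 \<in> simple_paths V E s t \<and> \<pi>2 \<in> simple_paths V E s t \<and> CT_weight w \<pi>1 \<pi>2 \<le> B"

definition CT_CQMS_optimal ::
  "'v set \<Rightarrow> ('v \<times> 'v) set \<Rightarrow> ('v \<times> 'v \<Rightarrow> real) \<Rightarrow> ('v \<times> 'v \<Rightarrow> real) \<Rightarrow> 'v \<Rightarrow> 'v \<Rightarrow> real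
   \<Rightarrow> ('v \<times> 'v) set \<Rightarrow> ('v \<times> 'v) set \<Rightarrow> bool" where
  "CT_CQMS_optimal V E p w s t B \<pi>1 \<pi>2 \<longleftrightarrow>
     CT_feasible V E w s t B \<pi>1 \<pi>2 \<and>
     (\<forall>\<sigma>1 \<sigma>2. CT_feasible V E w s t B \<sigma>1 \<sigma>2 \<longrightarrow>
        survivability p \<sigma>1 \<sigma>2 \<le> survivability p \<pi>1 \<pi>2)"

end

theory Submission
  imports Defs
begin

text \<open>Suppose an optimal connection (\<pi>1, \<pi>2) had a critical link c = (x, y) missed by a
  weight-shortest path \<sigma>. Cutting each \<pi>i at c gives a head ai from s to x and a tail di from
  y to t. As \<sigma> leads from a head vertex to a tail vertex without using c, it has a segment b from
  a vertex u of a head A to a vertex v of a tail D whose links leave no tail vertex and enter no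
  head vertex. Since \<sigma> is shortest, b is no longer than the detour u \<rightarrow> x \<rightarrow> y \<rightarrow> v along A, c and
  D; hence the connection formed by s \<rightarrow> u \<rightarrow> v \<rightarrow> t (along A, b, D) and by the other head and tail
  joined by c is no heavier than (\<pi>1, \<pi>2). Its critical links are critical links of (\<pi>1, \<pi>2)
  other than c, so its survivability is strictly larger, contradicting optimality.\<close>

lemma sum_set_le_sum_list:
  fixes f :: "'a \<Rightarrow> 'b :: ordered_comm_monoid_add"
  assumes "\<And>x. x \<in> set xs \<Longrightarrow> 0 \<le> f x"
  shows "sum f (set xs) \<le> (\<Sum>x\<leftarrow>xs. f x)"
  using assms
proof (induction xs)
  case (Cons x xs)
  have "sum f (set (x # xs)) \<le> f x + sum f (set xs)"
    using Cons.prems by (simp add: sum.insert_if add_increasing)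
  also have "\<dots> \<le> f x + (\<Sum>x\<leftarrow>xs. f x)"
    using Cons by (simp add: add_left_mono)
  finally show ?case by simp
qed simp

lemma prod_less_prod_subset:
  fixes f :: "'a \<Rightarrow> real"
  assumes "finite T" "S \<subseteq> T" "c \<in> T - S" "\<forall>e\<in>T. 0 < f e \<and> f e \<le> 1" "f c < 1"
  shows "prod f T < prod f S"
proof -
  have "prod f (T - S) = f c * prod f (T - S - {c})"
    using assms(1,3) by (simp add: prod.remove)
  also have "\<dots> \<le> f c"
    using assms(3,4) by (intro mult_left_le prod_le_1) (auto intro: less_imp_le)
  finally have "prod f (T - S) < 1"
    using assms(5) by simp
  moreover have "0 < prod f S"
    using assms(2,4) by (intro prod_pos) auto
  ultimately show ?thesis
    using prod.subset_diff[OF assms(2,1), of f] by simp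
qed

lemma links_of_Nil [simp]: "links_of [] = {}"
  and links_of_singleton [simp]: "links_of [x] = {}"
  and links_of_Cons_Cons [simp]: "links_of (x # y # zs) = insert (x, y) (links_of (y # zs))"
  by (simp_all add: links_of_def)

lemma zip_tl_append:
  "xs \<noteq> [] \<Longrightarrow> ys \<noteq> [] \<Longrightarrow>
   zip (xs @ ys) (tl (xs @ ys)) = zip xs (tl xs) @ (last xs, hd ys) # zip ys (tl ys)"
  by (induction xs rule: induct_list012) (auto simp: neq_Nil_conv)

lemma zip_tl_glue:
  assumes "xs \<noteq> []" "ys \<noteq> []" "last xs = hd ys"
  shows "zip (xs @ tl ys) (tl (xs @ tl ys)) = zip xs (tl xs) @ zip ys (tl ys)"
proof (cases "tl ys")
  case Nil
  with assms show ?thesis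
    by (cases ys) auto
next
  case (Cons z zs)
  with assms(2) obtain y where "ys = y # z # zs"
    by (cases ys) auto
  then show ?thesis
    using zip_tl_append[OF assms(1), of "z # zs"] Cons assms(3) by simp
qed

lemma links_of_append:
  "xs \<noteq> [] \<Longrightarrow> ys \<noteq> [] \<Longrightarrow> links_of (xs @ ys) = insert (last xs, hd ys) (links_of xs \<union> links_of ys)"
  unfolding links_of_def by (subst zip_tl_append) auto

lemma links_of_glue:
  "xs \<noteq> [] \<Longrightarrow> ys \<noteq> [] \<Longrightarrow> last xs = hd ys \<Longrightarrow> links_of (xs @ tl ys) = links_of xs \<union> links_of ys"
  unfolding links_of_def by (subst zip_tl_glue) auto

lemma links_of_subset_butlast_tl: "links_of xs \<subseteq> set (butlast xs) \<times> set (tl xs)"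
  by (induction xs rule: induct_list012) auto

lemma links_of_subset: "links_of xs \<subseteq> set xs \<times> set xs"
proof -
  have "set (butlast xs) \<subseteq> set xs" "set (tl xs) \<subseteq> set xs"
    by (meson in_set_butlastD subsetI) (cases xs; auto)
  then show ?thesis
    using links_of_subset_butlast_tl[of xs] by blast
qed

lemma links_of_split:
  "(x, y) \<in> links_of xs \<Longrightarrow> \<exists>a d. xs = a @ d \<and> a \<noteq> [] \<and> d \<noteq> [] \<and> last a = x \<and> hd d = y"
proof (induction xs rule: induct_list012)
  case (3 a b zs)
  show ?case
  proof (cases "(x, y) = (a, b)")
    case True
    then show ?thesis by (intro exI[of _ "[a]"] exI[of _ "b # zs"]) auto
  next
    case False
    with 3 obtain a' d where "b # zs = a' @ d" "a' \<noteq> []" "d \<noteq> []" "last a' = x" "hd d = y"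
      by auto
    then show ?thesis by (intro exI[of _ "a # a'"] exI[of _ d]) auto
  qed
qed auto

lemma crossing_segment:
  assumes "z \<in> set xs" "z \<in> X" "last xs \<in> Y"
  shows "\<exists>pre b post. xs = pre @ b @ post \<and> b \<noteq> [] \<and> hd b \<in> X \<and> last b \<in> Y \<and>
           (\<forall>(p, q)\<in>links_of b. p \<notin> Y \<and> q \<notin> X)"
proof -
  obtain pre u rest where xs: "xs = pre @ u # rest" "u \<in> X" "\<forall>z\<in>set rest. z \<notin> X"
    using split_list_last_prop[of xs "\<lambda>z. z \<in> X"] assms(1,2) by blast
  show ?thesis
  proof (cases "u \<in> Y")
    case True
    with xs show ?thesis
      by (intro exI[of _ pre] exI[of _ "[u]"] exI[of _ rest]) auto
  next
    case False
    with xs assms(3) have "rest \<noteq> []" "last rest \<in> Y"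
      by (auto split: if_splits)
    then obtain mid v post where rest: "rest = mid @ v # post" "v \<in> Y" "\<forall>z\<in>set mid. z \<notin> Y"
      using split_list_first_prop[of rest "\<lambda>z. z \<in> Y"] last_in_set by blast
    have "\<forall>(p, q)\<in>links_of (u # mid @ [v]). p \<notin> Y \<and> q \<notin> X"
      using links_of_subset_butlast_tl[of "u # mid @ [v]"] False rest xs(3)
      by (fastforce simp: butlast_append)
    with xs rest show ?thesis
      by (intro exI[of _ pre] exI[of _ "u # mid @ [v]"] exI[of _ post]) auto
  qed
qed

definition is_walk :: "'v set \<Rightarrow> ('v \<times> 'v) set \<Rightarrow> 'v \<Rightarrow> 'v \<Rightarrow> 'v list \<Rightarrow> bool" where
  "is_walk V E s t xs \<longleftrightarrow> xs \<noteq> [] \<and> hd xs = s \<and> last xs = t \<and> set xs \<subseteq> V \<and> links_of xs \<subseteq> E"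

text \<open>Unlike path_weight w (links_of xs), this counts repeated links with multiplicity, which
  makes it additive under concatenation; the two agree on simple walks.\<close>

definition walk_weight :: "('v \<times> 'v \<Rightarrow> real) \<Rightarrow> 'v list \<Rightarrow> real" where
  "walk_weight w xs = (\<Sum>e\<leftarrow>zip xs (tl xs). w e)"

lemma walk_weight_append:
  "xs \<noteq> [] \<Longrightarrow> ys \<noteq> [] \<Longrightarrow>
   walk_weight w (xs @ ys) = walk_weight w xs + w (last xs, hd ys) + walk_weight w ys"
  unfolding walk_weight_def by (subst zip_tl_append) auto

lemma walk_weight_glue:
  "xs \<noteq> [] \<Longrightarrow> ys \<noteq> [] \<Longrightarrow> last xs = hd ys \<Longrightarrow>
   walk_weight w (xs @ tl ys) = walk_weight w xs + walk_weight w ys"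
  unfolding walk_weight_def by (subst zip_tl_glue) auto

lemma is_walk_ends_in_set: "is_walk V E s t xs \<Longrightarrow> s \<in> set xs \<and> t \<in> set xs"
  unfolding is_walk_def by (metis hd_in_set last_in_set)

lemma is_walk_append_iff:
  "xs \<noteq> [] \<Longrightarrow> ys \<noteq> [] \<Longrightarrow> is_walk V E s t (xs @ ys) \<longleftrightarrow>
     is_walk V E s (last xs) xs \<and> (last xs, hd ys) \<in> E \<and> is_walk V E (hd ys) t ys"
  unfolding is_walk_def by (simp add: links_of_append) blast

lemma is_walk_glue_iff:
  assumes "xs \<noteq> []" "ys \<noteq> []" "last xs = hd ys"
  shows "is_walk V E s t (xs @ tl ys) \<longleftrightarrow> is_walk V E s (hd ys) xs \<and> is_walk V E (hd ys) t ys"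
proof -
  obtain y zs where ys: "ys = y # zs"
    using assms(2) by (cases ys) auto
  have "last (xs @ zs) = last ys" "set (xs @ zs) = set xs \<union> set ys"
    "links_of (xs @ zs) = links_of xs \<union> links_of ys"
    using assms last_in_set[OF assms(1)] links_of_glue[OF assms] ys by (auto simp: last_append)
  then show ?thesis
    unfolding is_walk_def using assms ys by auto
qed

lemma is_walk_split_at:
  assumes "is_walk V E s t xs" "u \<in> set xs"
  obtains xs1 xs2 where "xs = xs1 @ tl xs2" "is_walk V E s u xs1" "is_walk V E u t xs2"
proof -
  obtain p q where xs: "xs = (p @ [u]) @ tl (u # q)"
    using split_list[OF assms(2)] by auto
  with assms(1) have "is_walk V E s u (p @ [u])" "is_walk V E u t (u # q)"
    using is_walk_glue_iff[of "p @ [u]" "u # q" V E s t] by auto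
  then show ?thesis
    using that[OF xs] by blast
qed

lemma walk_splice:
  assumes "is_walk V E s u xs" "is_walk V E u v m" "is_walk V E v t ys"
  shows "is_walk V E s t (xs @ tl m @ tl ys)"
    and "walk_weight w (xs @ tl m @ tl ys) = walk_weight w xs + walk_weight w m + walk_weight w ys"
    and "links_of (xs @ tl m @ tl ys) = links_of xs \<union> links_of m \<union> links_of ys"
proof -
  have ne: "xs \<noteq> []" "m \<noteq> []" "ys \<noteq> []"
    and ends: "last xs = u" "hd m = u" "last m = v" "hd ys = v"
    using assms by (auto simp: is_walk_def)
  have xm: "is_walk V E s v (xs @ tl m)"
    using assms(1,2) is_walk_glue_iff[OF ne(1,2), of V E s v] ends by simp
  then have xm_ne: "xs @ tl m \<noteq> []" and xm_last: "last (xs @ tl m) = hd ys"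
    using ends by (auto simp: is_walk_def)
  note glue = is_walk_glue_iff[OF xm_ne ne(3) xm_last] walk_weight_glue[OF xm_ne ne(3) xm_last]
    links_of_glue[OF xm_ne ne(3) xm_last]
  show "is_walk V E s t (xs @ tl m @ tl ys)"
    using glue(1) xm assms(3) ends by simp
  show "walk_weight w (xs @ tl m @ tl ys) = walk_weight w xs + walk_weight w m + walk_weight w ys"
    using glue(2) walk_weight_glue[OF ne(1,2)] ends by simp
  show "links_of (xs @ tl m @ tl ys) = links_of xs \<union> links_of m \<union> links_of ys"
    using glue(3) links_of_glue[OF ne(1,2)] ends by simp
qed

lemma walk_contains_simple_walk:
  "is_walk V E s t xs \<Longrightarrow> \<exists>ys. is_walk V E s t ys \<and> distinct ys \<and> links_of ys \<subseteq> links_of xs"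
proof (induction "length xs" arbitrary: xs rule: less_induct)
  case less
  show ?case
  proof (cases "distinct xs")
    case False
    then obtain p m z q where decomp: "xs = p @ [z] @ m @ [z] @ q"
      using not_distinct_decomp by blast
    let ?loop = "z # m @ [z]" and ?tail = "z # q"
    have xs: "xs = (p @ [z]) @ tl (?loop @ tl ?tail)"
      using decomp by simp
    have walks: "is_walk V E s z (p @ [z])" "is_walk V E z t (?loop @ tl ?tail)"
      using less.prems is_walk_glue_iff[of "p @ [z]" "?loop @ tl ?tail" V E s t] xs by auto
    then have "is_walk V E z t ?tail"
      using is_walk_glue_iff[of ?loop ?tail V E z t] by auto
    with walks(1) have "is_walk V E s t ((p @ [z]) @ tl ?tail)"
      using is_walk_glue_iff[of "p @ [z]" ?tail V E s t] by auto
    moreover have "links_of ((p @ [z]) @ tl ?tail) \<subseteq> links_of xs"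
      using links_of_glue[of "p @ [z]" ?tail] links_of_glue[of "p @ [z]" "?loop @ tl ?tail"]
        links_of_glue[of ?loop ?tail] xs by auto
    moreover have "length ((p @ [z]) @ tl ?tail) < length xs"
      using xs by simp
    ultimately show ?thesis
      using less.hyps by blast
  qed (use less.prems in blast)
qed

lemma simple_paths_iff:
  "\<pi> \<in> simple_paths V E s t \<longleftrightarrow> (\<exists>xs. \<pi> = links_of xs \<and> is_walk V E s t xs \<and> distinct xs)"
  by (auto simp: simple_paths_def is_walk_def)

lemma simple_path_finite_subset: "\<pi> \<in> simple_paths V E s t \<Longrightarrow> finite \<pi> \<and> \<pi> \<subseteq> E"
  unfolding simple_paths_iff is_walk_def by (auto simp: links_of_def simp del: set_zip)

lemma path_weight_links_of_le:
  "(\<And>e. e \<in> links_of xs \<Longrightarrow> 0 \<le> w e) \<Longrightarrow> path_weight w (links_of xs) \<le> walk_weight w xs"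
  unfolding path_weight_def walk_weight_def links_of_def by (rule sum_set_le_sum_list)

lemma path_weight_links_of_distinct:
  "distinct xs \<Longrightarrow> path_weight w (links_of xs) = walk_weight w xs"
  by (simp add: path_weight_def walk_weight_def links_of_def distinct_zipI1 sum_list_distinct_conv_sum_set)

lemma simple_path_in_walk:
  assumes w: "\<forall>e\<in>E. 0 \<le> w e" and "is_walk V E s t xs"
  shows "\<exists>\<pi>\<in>simple_paths V E s t. \<pi> \<subseteq> links_of xs \<and> path_weight w \<pi> \<le> walk_weight w xs"
proof -
  obtain ys where ys: "is_walk V E s t ys" "distinct ys" "links_of ys \<subseteq> links_of xs"
    using walk_contains_simple_walk[OF assms(2)] by blast
  have xs_E: "links_of xs \<subseteq> E"
    using assms(2) by (simp add: is_walk_def)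
  have "path_weight w (links_of ys) \<le> path_weight w (links_of xs)"
    unfolding path_weight_def
    by (rule sum_mono2[OF _ ys(3)]) (simp add: links_of_def, use w xs_E in blast)
  also have "\<dots> \<le> walk_weight w xs"
    using xs_E w by (intro path_weight_links_of_le) blast
  finally have "path_weight w (links_of ys) \<le> walk_weight w xs" .
  moreover have "links_of ys \<in> simple_paths V E s t"
    unfolding simple_paths_iff using ys(1,2) by blast
  ultimately show ?thesis
    using ys(3) by blast
qed

lemma simple_path_via_link:
  assumes w: "\<forall>e\<in>E. 0 \<le> w e"
    and "is_walk V E s x a" "(x, y) \<in> E" "is_walk V E y t d"
  shows "\<exists>\<rho>\<in>simple_paths V E s t. \<rho> \<subseteq> insert (x, y) (links_of a \<union> links_of d) \<and>
           path_weight w \<rho> \<le> walk_weight w a + w (x, y) + walk_weight w d"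
proof -
  have ne: "a \<noteq> []" "d \<noteq> []" and ends: "last a = x" "hd d = y"
    using assms(2,4) by (auto simp: is_walk_def)
  have "is_walk V E s t (a @ d)"
    using is_walk_append_iff[OF ne] assms(2-4) ends by simp
  then obtain \<rho> where \<rho>: "\<rho> \<in> simple_paths V E s t" "\<rho> \<subseteq> links_of (a @ d)"
      "path_weight w \<rho> \<le> walk_weight w (a @ d)"
    using simple_path_in_walk[OF w] by blast
  moreover have "links_of (a @ d) = insert (x, y) (links_of a \<union> links_of d)"
    "walk_weight w (a @ d) = walk_weight w a + w (x, y) + walk_weight w d"
    using links_of_append[OF ne] walk_weight_append[OF ne] ends by simp_all
  ultimately show ?thesis
    by auto
qed

lemma shortest_path_le_walk_weight:
  assumes "\<forall>e\<in>E. 0 \<le> w e" "\<sigma> \<in> shortest_paths V E w s t" "is_walk V E s t xs"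
  shows "path_weight w \<sigma> \<le> walk_weight w xs"
proof -
  obtain \<pi> where "\<pi> \<in> simple_paths V E s t" "path_weight w \<pi> \<le> walk_weight w xs"
    using simple_path_in_walk[OF assms(1,3)] by blast
  with assms(2) show ?thesis
    unfolding shortest_paths_def by fastforce
qed

lemma shortest_path_segment_le:
  assumes w: "\<forall>e\<in>E. 0 \<le> w e"
    and \<sigma>: "links_of (xs @ tl b @ tl ys) \<in> shortest_paths V E w s t" "distinct (xs @ tl b @ tl ys)"
    and walks: "is_walk V E s u xs" "is_walk V E u v b" "is_walk V E v t ys"
    and detour: "is_walk V E u v c"
  shows "walk_weight w b \<le> walk_weight w c"
proof -
  have "walk_weight w xs + walk_weight w b + walk_weight w ys = walk_weight w (xs @ tl b @ tl ys)"
    using walk_splice(2)[OF walks] by simp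
  also have "\<dots> = path_weight w (links_of (xs @ tl b @ tl ys))"
    using \<sigma>(2) by (simp add: path_weight_links_of_distinct)
  also have "\<dots> \<le> walk_weight w (xs @ tl c @ tl ys)"
    using shortest_path_le_walk_weight[OF w \<sigma>(1) walk_splice(1)[OF walks(1) detour walks(3)]] .
  also have "\<dots> = walk_weight w xs + walk_weight w c + walk_weight w ys"
    using walk_splice(2)[OF walks(1) detour walks(3)] .
  finally show ?thesis by simp
qed

lemma reroute_through_segment:
  assumes w: "\<forall>e\<in>E. 0 \<le> w e"
    and \<sigma>: "links_of (xs @ tl b @ tl ys) \<in> shortest_paths V E w s t" "distinct (xs @ tl b @ tl ys)"
      "is_walk V E s u xs" "is_walk V E u v b" "is_walk V E v t ys"
    and A: "is_walk V E s x A" "u \<in> set A"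
    and D: "is_walk V E y t D" "v \<in> set D"
    and xy: "(x, y) \<in> E"
  shows "\<exists>\<rho>\<in>simple_paths V E s t. \<rho> \<subseteq> links_of A \<union> links_of b \<union> links_of D \<and>
           path_weight w \<rho> \<le> walk_weight w A + w (x, y) + walk_weight w D"
proof -
  obtain A1 A2 where A12: "A = A1 @ tl A2" "is_walk V E s u A1" "is_walk V E u x A2"
    using is_walk_split_at[OF A] .
  obtain D1 D2 where D12: "D = D1 @ tl D2" "is_walk V E y v D1" "is_walk V E v t D2"
    using is_walk_split_at[OF D] .
  have ne: "A2 \<noteq> []" "D1 \<noteq> []" and ends: "last A2 = x" "hd D1 = y"
    using A12 D12 by (auto simp: is_walk_def)
  have A_glue: "A1 \<noteq> []" "last A1 = hd A2" and D_glue: "D1 \<noteq> []" "last D1 = hd D2"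
    using A12 D12 by (auto simp: is_walk_def)
  have "is_walk V E u v (A2 @ D1)"
    using is_walk_append_iff[OF ne] A12(3) D12(2) xy ends by simp
  then have "walk_weight w b \<le> walk_weight w (A2 @ D1)"
    by (rule shortest_path_segment_le[OF w \<sigma>])
  also have "\<dots> = walk_weight w A2 + w (x, y) + walk_weight w D1"
    using walk_weight_append[OF ne] ends by simp
  finally have b_le: "walk_weight w b \<le> walk_weight w A2 + w (x, y) + walk_weight w D1" .
  let ?new = "A1 @ tl b @ tl D2"
  obtain \<rho> where \<rho>: "\<rho> \<in> simple_paths V E s t" "\<rho> \<subseteq> links_of ?new"
      "path_weight w \<rho> \<le> walk_weight w ?new"
    using simple_path_in_walk[OF w walk_splice(1)[OF A12(2) \<sigma>(4) D12(3)]] by blast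
  have "\<rho> \<subseteq> links_of A \<union> links_of b \<union> links_of D"
    using \<rho>(2) walk_splice(3)[OF A12(2) \<sigma>(4) D12(3)] A12(1) D12(1)
      links_of_glue[OF A_glue(1) ne(1) A_glue(2)] links_of_glue[OF D_glue(1) _ D_glue(2)] D12(3)
    by (auto simp: is_walk_def)
  moreover have "path_weight w \<rho> \<le> walk_weight w A + w (x, y) + walk_weight w D"
    using \<rho>(3) walk_splice(2)[OF A12(2) \<sigma>(4) D12(3)] b_le A12(1) D12(1)
      walk_weight_glue[OF A_glue(1) ne(1) A_glue(2)] walk_weight_glue[OF D_glue(1) _ D_glue(2)] D12(3)
    by (auto simp: is_walk_def)
  ultimately show ?thesis
    using \<rho>(1) by blast
qed

lemma simple_path_crossing_segment:
  assumes "\<sigma> \<in> simple_paths V E s t" "s \<in> X" "t \<in> Y"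
  obtains xs b ys where "\<sigma> = links_of (xs @ tl b @ tl ys)" "distinct (xs @ tl b @ tl ys)"
    "is_walk V E s (hd b) xs" "is_walk V E (hd b) (last b) b" "is_walk V E (last b) t ys"
    "hd b \<in> X" "last b \<in> Y" "\<forall>(p, q)\<in>links_of b. p \<notin> Y \<and> q \<notin> X"
proof -
  obtain sg where sg: "\<sigma> = links_of sg" "is_walk V E s t sg" "distinct sg"
    using assms(1) unfolding simple_paths_iff by blast
  then have "s \<in> set sg" "last sg \<in> Y"
    using assms(3) by (auto simp: is_walk_def)
  then obtain pre b post where seg: "sg = pre @ b @ post" "b \<noteq> []" "hd b \<in> X" "last b \<in> Y"
      "\<forall>(p, q)\<in>links_of b. p \<notin> Y \<and> q \<notin> X"
    using crossing_segment[of s sg X Y] assms(2) by blast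
  let ?xs = "pre @ [hd b]" and ?ys = "last b # post"
  have sg_eq: "sg = ?xs @ tl (b @ tl ?ys)"
    using seg(1,2) by (cases b) auto
  have ne: "b @ tl ?ys \<noteq> []" "last b = hd ?ys"
    using seg(2) by auto
  have "is_walk V E s t (?xs @ tl (b @ tl ?ys))"
    using sg(2) sg_eq by argo
  then have xs: "is_walk V E s (hd b) ?xs" and "is_walk V E (hd b) t (b @ tl ?ys)"
    using is_walk_glue_iff[of ?xs "b @ tl ?ys" V E s t] seg(2) by auto
  then have "is_walk V E (hd b) (last b) b" "is_walk V E (last b) t ?ys"
    using is_walk_glue_iff[OF seg(2) _ ne(2)] by auto
  moreover have "sg = ?xs @ tl b @ tl ?ys"
    using sg_eq seg(2) by simp
  then have "\<sigma> = links_of (?xs @ tl b @ tl ?ys)" "distinct (?xs @ tl b @ tl ?ys)"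
    using sg(1,3) by simp_all
  ultimately show ?thesis
    using that[OF _ _ xs _ _ seg(3-5)] by blast
qed

lemma simple_walk_split_at_link:
  assumes "is_walk V E s t xs" "distinct xs" "(x, y) \<in> links_of xs"
  obtains a d where "is_walk V E s x a" "is_walk V E y t d" "set a \<inter> set d = {}"
    "links_of xs = insert (x, y) (links_of a \<union> links_of d)"
    "path_weight w (links_of xs) = walk_weight w a + w (x, y) + walk_weight w d"
proof -
  obtain a d where ad: "xs = a @ d" "a \<noteq> []" "d \<noteq> []" "last a = x" "hd d = y"
    using links_of_split[OF assms(3)] by blast
  show ?thesis
  proof (rule that)
    show "is_walk V E s x a" "is_walk V E y t d"
      using assms(1) is_walk_append_iff[OF ad(2,3)] ad by auto
    show "set a \<inter> set d = {}"
      using assms(2) ad(1) by simp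
    show "links_of xs = insert (x, y) (links_of a \<union> links_of d)"
      using links_of_append[OF ad(2,3)] ad by simp
    show "path_weight w (links_of xs) = walk_weight w a + w (x, y) + walk_weight w d"
      using path_weight_links_of_distinct[OF assms(2)] walk_weight_append[OF ad(2,3)] ad by simp
  qed
qed

lemma exchange_at_link:
  assumes w: "\<forall>e\<in>E. 0 \<le> w e"
    and \<sigma>: "\<sigma> \<in> shortest_paths V E w s t" "(x, y) \<notin> \<sigma>"
    and heads: "is_walk V E s x a1" "is_walk V E s x a2"
    and tails: "is_walk V E y t d1" "is_walk V E y t d2"
    and xy: "(x, y) \<in> E"
    and disjoint: "set a1 \<inter> set d1 = {}" "set a2 \<inter> set d2 = {}"
  obtains \<rho>1 \<rho>2 where "\<rho>1 \<in> simple_paths V E s t" "\<rho>2 \<in> simple_paths V E s t"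
    "path_weight w \<rho>1 + path_weight w \<rho>2 \<le>
       (walk_weight w a1 + w (x, y) + walk_weight w d1) + (walk_weight w a2 + w (x, y) + walk_weight w d2)"
    "\<rho>1 \<inter> \<rho>2 \<subseteq> (links_of a1 \<union> links_of d1) \<inter> (links_of a2 \<union> links_of d2)"
proof -
  define X where "X = set a1 \<union> set a2"
  define Y where "Y = set d1 \<union> set d2"
  have "s \<in> X" "t \<in> Y"
    using heads(1) tails(1) by (auto simp: X_def Y_def dest: is_walk_ends_in_set)
  then obtain sx b sy where seg: "\<sigma> = links_of (sx @ tl b @ tl sy)" "distinct (sx @ tl b @ tl sy)"
      "is_walk V E s (hd b) sx" "is_walk V E (hd b) (last b) b" "is_walk V E (last b) t sy"
      "hd b \<in> X" "last b \<in> Y" "\<forall>(p, q)\<in>links_of b. p \<notin> Y \<and> q \<notin> X"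
    using simple_path_crossing_segment[of \<sigma> V E s t X Y] \<sigma>(1)
    unfolding shortest_paths_def by blast
  obtain A A' where AA: "(A, A') \<in> {(a1, a2), (a2, a1)}" "hd b \<in> set A"
    using seg(6) unfolding X_def by blast
  obtain D D' where DD: "(D, D') \<in> {(d1, d2), (d2, d1)}" "last b \<in> set D"
    using seg(7) unfolding Y_def by blast
  have walks: "is_walk V E s x A" "is_walk V E s x A'" "is_walk V E y t D" "is_walk V E y t D'"
    using AA(1) DD(1) heads tails by auto
  obtain \<rho>1 where \<rho>1: "\<rho>1 \<in> simple_paths V E s t" "\<rho>1 \<subseteq> links_of A \<union> links_of b \<union> links_of D"
      "path_weight w \<rho>1 \<le> walk_weight w A + w (x, y) + walk_weight w D"
    using reroute_through_segment[OF w \<sigma>(1)[unfolded seg(1)] seg(2-5) walks(1) AA(2) walks(3) DD(2) xy]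
    by blast
  obtain \<rho>2 where \<rho>2: "\<rho>2 \<in> simple_paths V E s t" "\<rho>2 \<subseteq> insert (x, y) (links_of A' \<union> links_of D')"
      "path_weight w \<rho>2 \<le> walk_weight w A' + w (x, y) + walk_weight w D'"
    using simple_path_via_link[OF w walks(2) xy walks(4)] by blast
  have "x \<in> set a1" "x \<in> set a2" "y \<in> set d1" "y \<in> set d2"
    using heads tails by (auto dest: is_walk_ends_in_set)
  then have "(x, y) \<notin> links_of A \<union> links_of D" and
    "(links_of A \<union> links_of D) \<inter> (links_of A' \<union> links_of D') \<subseteq>
       (links_of a1 \<union> links_of d1) \<inter> (links_of a2 \<union> links_of d2)"
    using AA(1) DD(1) disjoint links_of_subset[of a1] links_of_subset[of d1]
      links_of_subset[of a2] links_of_subset[of d2] by auto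
  moreover have "set A' \<subseteq> X" "set D' \<subseteq> Y"
    using AA(1) DD(1) by (auto simp: X_def Y_def)
  then have "links_of b \<inter> (links_of A' \<union> links_of D') = {}"
    using seg(8) links_of_subset[of A'] links_of_subset[of D'] by fast
  moreover have "(x, y) \<notin> links_of b"
    using \<sigma>(2) walk_splice(3)[OF seg(3-5)] seg(1) by blast
  ultimately have "\<rho>1 \<inter> \<rho>2 \<subseteq> (links_of a1 \<union> links_of d1) \<inter> (links_of a2 \<union> links_of d2)"
    using \<rho>1(2) \<rho>2(2) by blast
  moreover have "path_weight w \<rho>1 + path_weight w \<rho>2 \<le>
      (walk_weight w a1 + w (x, y) + walk_weight w d1) + (walk_weight w a2 + w (x, y) + walk_weight w d2)"
    using \<rho>1(3) \<rho>2(3) AA(1) DD(1) by auto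
  ultimately show ?thesis
    using that \<rho>1(1) \<rho>2(1) by blast
qed

lemma exchange_critical_link:
  assumes w: "\<forall>e\<in>E. 0 \<le> w e"
    and \<pi>: "\<pi>1 \<in> simple_paths V E s t" "\<pi>2 \<in> simple_paths V E s t" "c \<in> \<pi>1 \<inter> \<pi>2"
    and \<sigma>: "\<sigma> \<in> shortest_paths V E w s t" "c \<notin> \<sigma>"
  obtains \<rho>1 \<rho>2 where "\<rho>1 \<in> simple_paths V E s t" "\<rho>2 \<in> simple_paths V E s t"
    "path_weight w \<rho>1 + path_weight w \<rho>2 \<le> path_weight w \<pi>1 + path_weight w \<pi>2"
    "\<rho>1 \<inter> \<rho>2 \<subseteq> \<pi>1 \<inter> \<pi>2 - {c}"
proof -
  obtain x y where c: "c = (x, y)"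
    by fastforce
  obtain xs1 xs2 where xs1: "\<pi>1 = links_of xs1" "is_walk V E s t xs1" "distinct xs1"
    and xs2: "\<pi>2 = links_of xs2" "is_walk V E s t xs2" "distinct xs2"
    using \<pi>(1,2) unfolding simple_paths_iff by blast
  have c_xs: "(x, y) \<in> links_of xs1" "(x, y) \<in> links_of xs2" and xy: "(x, y) \<in> E"
    using \<pi>(3) c xs1 xs2 by (auto simp: is_walk_def)
  obtain a1 d1 where p1: "is_walk V E s x a1" "is_walk V E y t d1" "set a1 \<inter> set d1 = {}"
      "links_of xs1 = insert (x, y) (links_of a1 \<union> links_of d1)"
      "path_weight w (links_of xs1) = walk_weight w a1 + w (x, y) + walk_weight w d1"
    by (rule simple_walk_split_at_link[OF xs1(2,3) c_xs(1)])
  obtain a2 d2 where p2: "is_walk V E s x a2" "is_walk V E y t d2" "set a2 \<inter> set d2 = {}"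
      "links_of xs2 = insert (x, y) (links_of a2 \<union> links_of d2)"
      "path_weight w (links_of xs2) = walk_weight w a2 + w (x, y) + walk_weight w d2"
    by (rule simple_walk_split_at_link[OF xs2(2,3) c_xs(2)])
  obtain \<rho>1 \<rho>2 where \<rho>: "\<rho>1 \<in> simple_paths V E s t" "\<rho>2 \<in> simple_paths V E s t"
      "path_weight w \<rho>1 + path_weight w \<rho>2 \<le>
         (walk_weight w a1 + w (x, y) + walk_weight w d1) + (walk_weight w a2 + w (x, y) + walk_weight w d2)"
      "\<rho>1 \<inter> \<rho>2 \<subseteq> (links_of a1 \<union> links_of d1) \<inter> (links_of a2 \<union> links_of d2)"
    using exchange_at_link[OF w \<sigma>(1) \<sigma>(2)[unfolded c] p1(1) p2(1) p1(2) p2(2) xy p1(3) p2(3)] .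
  show ?thesis
  proof (rule that[OF \<rho>(1,2)])
    show "path_weight w \<rho>1 + path_weight w \<rho>2 \<le> path_weight w \<pi>1 + path_weight w \<pi>2"
      using \<rho>(3) p1(5) p2(5) xs1(1) xs2(1) by simp
    have "c \<notin> links_of a1 \<union> links_of d1"
      using p1(1-3) c links_of_subset[of a1] links_of_subset[of d1]
      by (blast dest: is_walk_ends_in_set)
    then show "\<rho>1 \<inter> \<rho>2 \<subseteq> \<pi>1 \<inter> \<pi>2 - {c}"
      using \<rho>(4) p1(4) p2(4) xs1(1) xs2(1) c by blast
  qed
qed

theorem theorem1:
  fixes V :: "'v set" and E :: "('v \<times> 'v) set"
    and p w :: "'v \<times> 'v \<Rightarrow> real" and pmax B :: real and s t :: 'v
  assumes "network V E p pmax w"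
    and "s \<in> V" and "t \<in> V"
    and "CT_CQMS_optimal V E p w s t B \<pi>1 \<pi>2"
  shows "critical_links \<pi>1 \<pi>2 \<subseteq> in_all_sp_links V E w s t"
proof
  fix c assume c: "c \<in> critical_links \<pi>1 \<pi>2"
  have w: "\<forall>e\<in>E. 0 \<le> w e" and p: "\<forall>e\<in>E. 0 < p e \<and> p e < 1"
    using assms(1) unfolding network_def by (auto intro: less_imp_le)
  have \<pi>: "\<pi>1 \<in> simple_paths V E s t" "\<pi>2 \<in> simple_paths V E s t" "CT_weight w \<pi>1 \<pi>2 \<le> B"
    and opt: "\<And>\<sigma>1 \<sigma>2. CT_feasible V E w s t B \<sigma>1 \<sigma>2 \<Longrightarrow> survivability p \<sigma>1 \<sigma>2 \<le> survivability p \<pi>1 \<pi>2"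
    using assms(4) unfolding CT_CQMS_optimal_def CT_feasible_def by auto
  show "c \<in> in_all_sp_links V E w s t"
    unfolding in_all_sp_links_def
  proof (rule InterI, rule ccontr)
    fix \<sigma> assume "\<sigma> \<in> shortest_paths V E w s t" "c \<notin> \<sigma>"
    then obtain \<rho>1 \<rho>2 where \<rho>: "\<rho>1 \<in> simple_paths V E s t" "\<rho>2 \<in> simple_paths V E s t"
        "path_weight w \<rho>1 + path_weight w \<rho>2 \<le> path_weight w \<pi>1 + path_weight w \<pi>2"
        "\<rho>1 \<inter> \<rho>2 \<subseteq> \<pi>1 \<inter> \<pi>2 - {c}"
      using exchange_critical_link[OF w \<pi>(1,2)] c unfolding critical_links_def by blast
    then have "survivability p \<rho>1 \<rho>2 \<le> survivability p \<pi>1 \<pi>2"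
      using \<pi>(3) by (intro opt) (simp add: CT_feasible_def CT_weight_def)
    moreover have "survivability p \<pi>1 \<pi>2 < survivability p \<rho>1 \<rho>2"
      unfolding survivability_def critical_links_def
      using simple_path_finite_subset[OF \<pi>(1)] \<rho>(4) c p unfolding critical_links_def
      by (intro prod_less_prod_subset) (auto intro: less_imp_le)
    ultimately show False
      by simp
  qed
qed

end
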